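(* Let $X$ be a countably infinite set, $\mathscr{A}=2^X$, $\mu$ a measure on $\mathscr{A}$ with $\mu(x):=\mu(\{x\})<\infty$ for all $x\in X$, and $\phi$ an injective nonsingular transformation of $X$. Assume $P\colon X\times\mathfrak{B}(\mathbb{R}_+)\to[0,1]$ is a family of probability measures satisfying (CC): $\mathsf{E}(P(\cdot,\sigma))(x)=\dfrac{\int_\sigma t\,P(\phi(x),\mathrm{d}t)}{\mathsf{h}_\phi(\phi(x))}$ for $\mu$-a.e. $x\in X$, for every $\sigma\in\mathfrak{B}(\mathbb{R}_+)$. Then (i) $\int_\sigma t^n P(\phi^n(x),\mathrm{d}t)=\mathsf{h}_{\phi^n}(\phi^n(x))\cdot P(x,\sigma)$ for all $\sigma\in\mathfrak{B}(\mathbb{R}_+)$, $n\in\mathbb{Z}_+$ and $x\in X$ with $\mu(x)>0$. Moreover, if $\mu(x)>0$ for every $x\in X$, then (ii) $\int_\sigma t^nP(x,\mathrm{d}t)=\mathsf{h}_{\phi^n}(x)\cdot P\big((\phi^n)^{-1}(x),\sigma\big)$ for all $\sigma\in\mathfrak{B}(\mathbb{R}_+)$, $x\in\phi^n(X)$ and $n\in\mathbb{Z}_+$.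
   Context: $\mathbb{R}_+=[0,\infty)$, $\mathbb{Z}_+=\{0,1,\dots\}$. $\phi$ nonsingular means $\mu(\phi^{-1}(\{x\}))=0$ whenever $\mu(x)=0$. $\phi^n$ is the $n$-fold composition and $\mathsf{h}_{\phi^n}(x)=\mu(\phi^{-n}(\{x\}))/\mu(x)$, with $\mathsf{h}_{\phi^n}(x)=1$ if $\mu(x)=0$ (convention $0/0=1$; also $1/0=\infty$, $0\cdot\infty=0$). $\mathsf{E}(f)$ is the conditional expectation of $f\colon X\to[0,\infty]$ w.r.t. the $\sigma$-algebra $\phi^{-1}(2^X)$: the a.e. unique $\phi^{-1}(2^X)$-measurable function with $\int(g\circ\phi)f\,\mathrm{d}\mu=\int(g\circ\phi)\mathsf{E}(f)\,\mathrm{d}\mu$ for all $g\colon X\to[0,\infty]$. A family of probability measures: each $P(x,\cdot)$ is a Borel probability measure on $\mathbb{R}_+$. *)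

theory Defs
  imports "HOL-Probability.Probability"
begin

definition hphi :: "'a measure \<Rightarrow> ('a \<Rightarrow> 'a) \<Rightarrow> 'a \<Rightarrow> ennreal" where
  "hphi M f x = (if emeasure M {x} = 0 then 1 else emeasure M (f -` {x}) / emeasure M {x})"

definition condexp :: "'a measure \<Rightarrow> ('a \<Rightarrow> 'a) \<Rightarrow> ('a \<Rightarrow> ennreal) \<Rightarrow> 'a \<Rightarrow> ennreal" where
  "condexp M f g = nn_cond_exp M (vimage_algebra UNIV f (count_space UNIV)) g"

end

theory Submission
  imports Defs
begin

text \<open>Because \<phi> is injective, the sigma-algebra \<phi>^-1(2^X) is all of 2^X, so the conditional
  expectation is the identity and (CC) holds at every atom of positive mass. There it says that
  t P(\<phi> x, dt) = h_\<phi>(\<phi> x) P(x, dt) as measures; integrating t^n against both sides and inducting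
  along the orbit x, \<phi> x, \<phi>^2 x, ... gives (i), because h_\<phi>(\<phi> y) = \<mu>(y)/\<mu>(\<phi> y) and these
  ratios telescope to \<mu>(x)/\<mu>(\<phi>^n x) = h_\<phi>^n(\<phi>^n x). Part (ii) is (i) read at the preimage point.\<close>

lemma AE_atom:
  assumes "AE y in M. Q y" and "{x} \<in> sets M" and "emeasure M {x} \<noteq> 0"
  shows "Q x"
proof (rule ccontr)
  assume "\<not> Q x"
  from assms(1) obtain N where N: "{y \<in> space M. \<not> Q y} \<subseteq> N" "emeasure M N = 0" "N \<in> sets M"
    by (rule AE_E)
  have "{x} \<subseteq> N"
    using N(1) \<open>\<not> Q x\<close> sets.sets_into_space[OF assms(2)] by auto
  then have "emeasure M {x} \<le> emeasure M N"
    using N(3) by (rule emeasure_mono)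
  with N(2) assms(3) show False by simp
qed

lemma sigma_finite_measure_countable_atoms:
  assumes "countable (space M)"
    and "\<And>x. x \<in> space M \<Longrightarrow> {x} \<in> sets M" and "\<And>x. x \<in> space M \<Longrightarrow> emeasure M {x} \<noteq> \<infinity>"
  shows "sigma_finite_measure M"
proof (rule sigma_finite_measure.intro, intro exI conjI)
  show "countable ((\<lambda>x. {x}) ` space M)"
    using assms(1) by (rule countable_image)
qed (use assms(2,3) in auto)

lemma sets_vimage_algebra_inj_count_space:
  assumes "inj f"
  shows "sets (vimage_algebra UNIV f (count_space UNIV)) = Pow UNIV"
proof (intro equalityI subsetI)
  fix B :: "'a set"
  have "f -` (f ` B) \<inter> UNIV \<in> sets (vimage_algebra UNIV f (count_space UNIV))"
    by (rule in_vimage_algebra) auto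
  then show "B \<in> sets (vimage_algebra UNIV f (count_space UNIV))"
    using inj_vimage_image_eq[OF assms] by simp
qed auto

lemma condexp_inj_AE_eq:
  fixes M :: "'a measure"
  assumes "countable (UNIV :: 'a set)" and space_M: "space M = UNIV" and sets_M: "sets M = Pow UNIV"
    and "\<And>x. emeasure M {x} < \<infinity>" and "inj \<phi>"
  shows "AE x in M. condexp M \<phi> g x = g x"
proof -
  let ?F = "vimage_algebra UNIV \<phi> (count_space UNIV)"
  have sets_F: "sets ?F = Pow UNIV"
    using \<open>inj \<phi>\<close> by (rule sets_vimage_algebra_inj_count_space)
  have sub: "subalgebra M ?F"
    unfolding subalgebra_def using sets_F space_M sets_M by auto
  have "sigma_finite_measure (restr_to_subalg M ?F)"
    using assms(1,4) sets_F
    by (intro sigma_finite_measure_countable_atoms)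
       (auto simp: space_restr_to_subalg sets_restr_to_subalg[OF sub] space_M
                   emeasure_restr_to_subalg[OF sub] less_top[symmetric])
  then interpret sigma_finite_subalgebra M ?F
    using sub by (intro sigma_finite_subalgebra.intro)
  have "borel_measurable ?F = (borel_measurable (count_space UNIV) :: ('a \<Rightarrow> ennreal) set)"
    by (rule measurable_cong_sets) (simp_all add: sets_F)
  then have "g \<in> borel_measurable ?F"
    by simp
  then have "AE x in M. g x = nn_cond_exp M ?F g x"
    by (rule nn_cond_exp_F_meas)
  then show ?thesis
    unfolding condexp_def by (auto elim: AE_mp)
qed

text \<open>The hypothesis says that the measures with densities f w.r.t. Q and h w.r.t. R agree.\<close>

lemma nn_integral_density_scaled:
  assumes sets_R: "sets R = sets Q" and f: "f \<in> borel_measurable Q" and g: "g \<in> borel_measurable Q"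
    and "h \<noteq> 0" and "h \<noteq> \<infinity>"
    and R_eq: "\<And>A. A \<in> sets Q \<Longrightarrow> emeasure R A = (\<integral>\<^sup>+ x \<in> A. f x \<partial>Q) / h"
  shows "(\<integral>\<^sup>+ x. f x * g x \<partial>Q) = h * (\<integral>\<^sup>+ x. g x \<partial>R)"
proof -
  have "density Q f = density R (\<lambda>_. h)"
  proof (rule measure_eqI)
    fix A assume "A \<in> sets (density Q f)"
    then have A: "A \<in> sets Q" by simp
    have "emeasure (density Q f) A = h * emeasure R A"
      using A f R_eq[OF A] \<open>h \<noteq> 0\<close> \<open>h \<noteq> \<infinity>\<close>
      by (simp add: emeasure_density ennreal_times_divide ennreal_mult_divide_eq mult.commute[of h])
    also have "\<dots> = emeasure (density R (\<lambda>_. h)) A"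
      using A sets_R by (simp add: emeasure_density nn_integral_cmult_indicator)
    finally show "emeasure (density Q f) A = emeasure (density R (\<lambda>_. h)) A" .
  qed (simp add: sets_R)
  then have "(\<integral>\<^sup>+ x. g x \<partial>density Q f) = (\<integral>\<^sup>+ x. g x \<partial>density R (\<lambda>_. h))"
    by simp
  moreover have "g \<in> borel_measurable R"
    using g by (simp add: measurable_cong_sets[OF sets_R refl])
  ultimately show ?thesis
    using f g by (simp add: nn_integral_density nn_integral_cmult)
qed

lemma set_nn_integral_power_Suc_eq:
  fixes Q R :: "real measure"
  assumes sets_Q: "sets Q = sets (restrict_space borel {0..})"
    and sets_R: "sets R = sets (restrict_space borel {0..})"
    and "h \<noteq> 0" and "h \<noteq> \<infinity>"
    and R_eq: "\<And>A. A \<in> sets (restrict_space borel {0..}) \<Longrightarrow>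
       emeasure R A = (\<integral>\<^sup>+ t \<in> A. ennreal t \<partial>Q) / h"
    and \<sigma>: "\<sigma> \<in> sets (restrict_space borel {0..})"
  shows "(\<integral>\<^sup>+ t \<in> \<sigma>. ennreal (t ^ Suc n) \<partial>Q) = h * (\<integral>\<^sup>+ t \<in> \<sigma>. ennreal (t ^ n) \<partial>R)"
proof -
  have measurable: "(\<lambda>t. ennreal (p t)) \<in> borel_measurable Q" if "p \<in> borel_measurable borel" for p
    using that by (subst measurable_cong_sets[OF sets_Q refl]) (intro measurable_restrict_space1, simp)
  have "space Q = {0..}"
    using sets_eq_imp_space_eq[OF sets_Q] by simp
  then have "(\<integral>\<^sup>+ t \<in> \<sigma>. ennreal (t ^ Suc n) \<partial>Q)
      = (\<integral>\<^sup>+ t. ennreal t * (ennreal (t ^ n) * indicator \<sigma> t) \<partial>Q)"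
    by (intro nn_integral_cong) (auto simp: ennreal_mult[symmetric] indicator_def)
  also have "\<dots> = h * (\<integral>\<^sup>+ t \<in> \<sigma>. ennreal (t ^ n) \<partial>R)"
    using \<open>h \<noteq> 0\<close> \<open>h \<noteq> \<infinity>\<close> \<sigma> sets_Q sets_R R_eq
    by (intro nn_integral_density_scaled measurable borel_measurable_times_ennreal) auto
  finally show ?thesis .
qed

lemma ennreal_divide_mult_divide_cancel:
  fixes a b c :: ennreal
  assumes "b \<noteq> 0" and "b \<noteq> \<top>"
  shows "b / c * (a / b) = a / c"
  using assms by (metis ennreal_divide_times mult_1 mult_divide_eq_ennreal)

lemma hphi_inj_apply:
  assumes "inj g" and "emeasure M {g y} \<noteq> 0"
  shows "hphi M g (g y) = emeasure M {y} / emeasure M {g y}"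
proof -
  have "g -` {g y} = {y}"
    using assms(1) by (auto dest: injD)
  with assms(2) show ?thesis
    unfolding hphi_def by simp
qed

lemma emeasure_singleton_funpow_pos:
  assumes "inj \<phi>" and nonsingular: "\<And>x. emeasure M {x} = 0 \<Longrightarrow> emeasure M (\<phi> -` {x}) = 0"
    and "emeasure M {x} > 0"
  shows "emeasure M {(\<phi> ^^ n) x} > 0"
proof (induction n)
  case (Suc n)
  have "\<phi> -` {\<phi> ((\<phi> ^^ n) x)} = {(\<phi> ^^ n) x}"
    using \<open>inj \<phi>\<close> by (auto dest: injD)
  with Suc nonsingular[of "\<phi> ((\<phi> ^^ n) x)"] show ?case
    by (auto simp: zero_less_iff_neq_zero)
qed (use assms(3) in simp)

lemma set_nn_integral_power_funpow:
  fixes P :: "'a \<Rightarrow> real measure"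
  assumes finite_pts: "\<And>x. emeasure M {x} < \<infinity>" and "inj \<phi>"
    and nonsingular: "\<And>x. emeasure M {x} = 0 \<Longrightarrow> emeasure M (\<phi> -` {x}) = 0"
    and P_sets: "\<And>x. sets (P x) = sets (restrict_space borel {0::real..})"
    and CC: "\<And>y \<sigma>. emeasure M {y} > 0 \<Longrightarrow> \<sigma> \<in> sets (restrict_space borel {0::real..}) \<Longrightarrow>
       emeasure (P y) \<sigma> = (\<integral>\<^sup>+ t \<in> \<sigma>. ennreal t \<partial>P (\<phi> y)) / hphi M \<phi> (\<phi> y)"
    and x: "emeasure M {x} > 0" and \<sigma>: "\<sigma> \<in> sets (restrict_space borel {0::real..})"
  shows "(\<integral>\<^sup>+ t \<in> \<sigma>. ennreal (t ^ n) \<partial>P ((\<phi> ^^ n) x))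
    = hphi M (\<phi> ^^ n) ((\<phi> ^^ n) x) * emeasure (P x) \<sigma>"
proof -
  have pos: "emeasure M {(\<phi> ^^ n) x} > 0" for n
    using \<open>inj \<phi>\<close> nonsingular x by (rule emeasure_singleton_funpow_pos)
  have hphi_funpow: "hphi M (\<phi> ^^ n) ((\<phi> ^^ n) x) = emeasure M {x} / emeasure M {(\<phi> ^^ n) x}" for n
    using inj_fn[OF \<open>inj \<phi>\<close>] pos[of n] by (intro hphi_inj_apply) auto
  show ?thesis
  proof (induction n)
    case 0
    have "emeasure M {x} / emeasure M {x} = 1"
      using x finite_pts[of x] by (simp add: ennreal_divide_self)
    then show ?case
      using \<sigma> P_sets[of x] hphi_funpow[of 0] by (simp add: id_def)
  next
    case (Suc n)
    let ?y = "(\<phi> ^^ n) x"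
    have hphi_y: "hphi M \<phi> (\<phi> ?y) = emeasure M {?y} / emeasure M {\<phi> ?y}"
      using \<open>inj \<phi>\<close> pos[of "Suc n"] by (intro hphi_inj_apply) auto
    have "hphi M \<phi> (\<phi> ?y) \<noteq> 0" "hphi M \<phi> (\<phi> ?y) \<noteq> \<infinity>"
      using hphi_y pos[of n] pos[of "Suc n"] finite_pts[of ?y] finite_pts[of "\<phi> ?y"]
      by (auto simp: ennreal_divide_eq_0_iff ennreal_divide_eq_top_iff)
    then have "(\<integral>\<^sup>+ t \<in> \<sigma>. ennreal (t ^ Suc n) \<partial>P (\<phi> ?y))
        = hphi M \<phi> (\<phi> ?y) * (\<integral>\<^sup>+ t \<in> \<sigma>. ennreal (t ^ n) \<partial>P ?y)"
      using P_sets CC[OF pos[of n]] \<sigma> by (intro set_nn_integral_power_Suc_eq)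
    also have "\<dots> = emeasure M {?y} / emeasure M {\<phi> ?y} * (emeasure M {x} / emeasure M {?y})
        * emeasure (P x) \<sigma>"
      using Suc hphi_y hphi_funpow[of n] by (simp add: mult.assoc)
    also have "\<dots> = emeasure M {x} / emeasure M {\<phi> ?y} * emeasure (P x) \<sigma>"
      using pos[of n] finite_pts[of ?y] by (simp add: ennreal_divide_mult_divide_cancel)
    also have "\<dots> = hphi M (\<phi> ^^ Suc n) ((\<phi> ^^ Suc n) x) * emeasure (P x) \<sigma>"
      using hphi_funpow[of "Suc n"] by simp
    finally show ?case by (simp add: comp_def)
  qed
qed

theorem proposition36:
  fixes M :: "'a measure" and \<phi> :: "'a \<Rightarrow> 'a" and P :: "'a \<Rightarrow> real measure"
  assumes X_countable: "countable (UNIV :: 'a set)"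
    and X_infinite: "infinite (UNIV :: 'a set)"
    and space_M: "space M = UNIV"
    and sets_M: "sets M = Pow UNIV"
    and finite_pts: "\<And>x. emeasure M {x} < \<infinity>"
    and inj_phi: "inj \<phi>"
    and nonsingular: "\<And>x. emeasure M {x} = 0 \<Longrightarrow> emeasure M (\<phi> -` {x}) = 0"
    and P_sets: "\<And>x. sets (P x) = sets (restrict_space borel {0::real..})"
    and P_prob: "\<And>x. prob_space (P x)"
    and CC: "\<And>\<sigma>. \<sigma> \<in> sets (restrict_space borel {0::real..}) \<Longrightarrow>
       AE x in M. condexp M \<phi> (\<lambda>y. emeasure (P y) \<sigma>) x
         = (\<integral>\<^sup>+ t \<in> \<sigma>. ennreal t \<partial>P (\<phi> x)) / hphi M \<phi> (\<phi> x)"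
  shows "(\<forall>\<sigma> \<in> sets (restrict_space borel {0::real..}). \<forall>n::nat. \<forall>x. emeasure M {x} > 0 \<longrightarrow>
            (\<integral>\<^sup>+ t \<in> \<sigma>. ennreal (t ^ n) \<partial>P ((\<phi> ^^ n) x))
              = hphi M (\<phi> ^^ n) ((\<phi> ^^ n) x) * emeasure (P x) \<sigma>)
       \<and> ((\<forall>x. emeasure M {x} > 0) \<longrightarrow>
          (\<forall>\<sigma> \<in> sets (restrict_space borel {0::real..}). \<forall>n::nat. \<forall>x \<in> range (\<phi> ^^ n).
            (\<integral>\<^sup>+ t \<in> \<sigma>. ennreal (t ^ n) \<partial>P x)
              = hphi M (\<phi> ^^ n) x * emeasure (P (inv (\<phi> ^^ n) x)) \<sigma>))"
proof -
  have CC_atoms: "emeasure (P y) \<sigma> = (\<integral>\<^sup>+ t \<in> \<sigma>. ennreal t \<partial>P (\<phi> y)) / hphi M \<phi> (\<phi> y)"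
    if "emeasure M {y} > 0" and \<sigma>: "\<sigma> \<in> sets (restrict_space borel {0::real..})" for y \<sigma>
  proof -
    have "AE x in M. emeasure (P x) \<sigma> = (\<integral>\<^sup>+ t \<in> \<sigma>. ennreal t \<partial>P (\<phi> x)) / hphi M \<phi> (\<phi> x)"
      using condexp_inj_AE_eq[OF X_countable space_M sets_M finite_pts inj_phi, of "\<lambda>y. emeasure (P y) \<sigma>"] CC[OF \<sigma>]
      by eventually_elim simp
    then show ?thesis
      by (rule AE_atom) (use that sets_M in auto)
  qed
  have part_i: "(\<integral>\<^sup>+ t \<in> \<sigma>. ennreal (t ^ n) \<partial>P ((\<phi> ^^ n) x))
      = hphi M (\<phi> ^^ n) ((\<phi> ^^ n) x) * emeasure (P x) \<sigma>"
    if "emeasure M {x} > 0" "\<sigma> \<in> sets (restrict_space borel {0::real..})" for \<sigma> n x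
    using finite_pts inj_phi nonsingular P_sets CC_atoms that by (rule set_nn_integral_power_funpow)
  have part_ii: "(\<integral>\<^sup>+ t \<in> \<sigma>. ennreal (t ^ n) \<partial>P x) = hphi M (\<phi> ^^ n) x * emeasure (P (inv (\<phi> ^^ n) x)) \<sigma>"
    if "emeasure M {z} > 0" "\<sigma> \<in> sets (restrict_space borel {0::real..})" "x = (\<phi> ^^ n) z" for \<sigma> n x z
    using part_i[OF that(1,2), of n] inv_f_f[OF inj_fn[OF inj_phi]] that(3) by simp
  show ?thesis
    using part_i part_ii by blast
qed

end
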